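(* The $\Re$-module $R_d(a,b,c)$ is isomorphic to $R_d(-a-1,b,c)$. Moreover, setting $w_i=\prod_{h=0}^{i-1}(A-\theta_{d-h})v_0$ for $0\le i\le d$, the vectors $w_0,\dots,w_d$ form a basis of $R_d(a,b,c)$ with $Aw_i=\theta_{d-i}w_i+w_{i+1}$ (with $w_{d+1}=0$) and $Bw_i=\theta_i^*w_i+\phi_iw_{i-1}$ (with $w_{-1}=0$) for $0\le i\le d$, where $\phi_i=i(i-d-1)(a-b+c-\tfrac d2+i)(a-b-c-\tfrac d2+i-1)$.
   Context: $\mathbb F$ is algebraically closed with $\operatorname{char}\mathbb F\ne2$. The Racah algebra $\Re$ is the unital associative $\mathbb F$-algebra with generators $A,B,C,D$ and relations $[A,B]=[B,C]=[C,A]=2D$ together with the requirement that each of $\alpha:=[A,D]+AC-BA$, $\beta:=[B,D]+BA-CB$, $\gamma:=[C,D]+CB-AC$ is central in $\Re$; $\delta:=A+B+C$. For $a,b,c\in\mathbb F$ and $d\in\mathbb N$ set $\theta_i=(a+\tfrac d2-i)(a+\tfrac d2-i+1)$, $\theta_i^*=(b+\tfrac d2-i)(b+\tfrac d2-i+1)$, $\varphi_i=i(i-d-1)(a+b+c+\tfrac d2-i+2)(a+b-c+\tfrac d2-i+1)$. $R_d(a,b,c)$ denotes the $(d+1)$-dimensional $\Re$-module with a basis $v_0,\dots,v_d$ such that $Av_i=\theta_iv_i+v_{i+1}$ ($v_{d+1}=0$), $Bv_i=\theta_i^*v_i+\varphi_iv_{i-1}$ ($v_{-1}=0$), and $\alpha,\beta,\delta$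 act as the scalars $(c-b)(c+b+1)(a-\tfrac d2)(a+\tfrac d2+1)$, $(a-c)(a+c+1)(b-\tfrac d2)(b+\tfrac d2+1)$, $\tfrac d2(\tfrac d2+1)+a(a+1)+b(b+1)+c(c+1)$ respectively (exists, unique up to isomorphism). *)

theory Defs
  imports "HOL-Computational_Algebra.Polynomial" "Jordan_Normal_Form.Matrix"
begin

text \<open>Concrete model of the Racah algebra module R_d(a,b,c) on F^(d+1), basis v_i = unit_vec (d+1) i.
  The generators A,B,C,D act by the matrices below: C = delta - A - B and D = [A,B]/2,
  as forced by delta = A+B+C and [A,B] = 2D.\<close>

definition rtheta :: "'a::field \<Rightarrow> nat \<Rightarrow> nat \<Rightarrow> 'a" where
  "rtheta a d i = (a + of_nat d / 2 - of_nat i) * (a + of_nat d / 2 - of_nat i + 1)"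

definition rphi :: "'a::field \<Rightarrow> 'a \<Rightarrow> 'a \<Rightarrow> nat \<Rightarrow> nat \<Rightarrow> 'a" where
  "rphi a b c d i = of_nat i * (of_nat i - of_nat d - 1)
      * (a + b + c + of_nat d / 2 - of_nat i + 2) * (a + b - c + of_nat d / 2 - of_nat i + 1)"

definition rdelta :: "'a::field \<Rightarrow> 'a \<Rightarrow> 'a \<Rightarrow> nat \<Rightarrow> 'a" where
  "rdelta a b c d = (of_nat d / 2) * (of_nat d / 2 + 1) + a * (a + 1) + b * (b + 1) + c * (c + 1)"

definition RA :: "'a::field \<Rightarrow> 'a \<Rightarrow> 'a \<Rightarrow> nat \<Rightarrow> 'a mat" where
  "RA a b c d = mat (d+1) (d+1)
     (\<lambda>(i,j). if i = j then rtheta a d j else if i = j + 1 then 1 else 0)"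

definition RB :: "'a::field \<Rightarrow> 'a \<Rightarrow> 'a \<Rightarrow> nat \<Rightarrow> 'a mat" where
  "RB a b c d = mat (d+1) (d+1)
     (\<lambda>(i,j). if i = j then rtheta b d j else if j = i + 1 then rphi a b c d j else 0)"

definition RC :: "'a::field \<Rightarrow> 'a \<Rightarrow> 'a \<Rightarrow> nat \<Rightarrow> 'a mat" where
  "RC a b c d = rdelta a b c d \<cdot>\<^sub>m 1\<^sub>m (d+1) - RA a b c d - RB a b c d"

definition RD :: "'a::field \<Rightarrow> 'a \<Rightarrow> 'a \<Rightarrow> nat \<Rightarrow> 'a mat" where
  "RD a b c d = (1/2) \<cdot>\<^sub>m (RA a b c d * RB a b c d - RB a b c d * RA a b c d)"

definition racah_iso :: "nat \<Rightarrow> 'a::field \<Rightarrow> 'a \<Rightarrow> 'a \<Rightarrow> 'a \<Rightarrow> 'a \<Rightarrow> 'a \<Rightarrow> bool" where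
  "racah_iso d a b c a' b' c' \<longleftrightarrow>
     (\<exists>P \<in> carrier_mat (d+1) (d+1). invertible_mat P \<and>
        P * RA a b c d = RA a' b' c' d * P \<and>
        P * RB a b c d = RB a' b' c' d * P \<and>
        P * RC a b c d = RC a' b' c' d * P \<and>
        P * RD a b c d = RD a' b' c' d * P)"

fun wvec :: "'a::field \<Rightarrow> 'a \<Rightarrow> 'a \<Rightarrow> nat \<Rightarrow> nat \<Rightarrow> 'a vec" where
  "wvec a b c d 0 = unit_vec (d+1) 0"
| "wvec a b c d (Suc i) =
     (RA a b c d - rtheta a d (d - i) \<cdot>\<^sub>m 1\<^sub>m (d+1)) *\<^sub>v wvec a b c d i"

definition rphi' :: "'a::field \<Rightarrow> 'a \<Rightarrow> 'a \<Rightarrow> nat \<Rightarrow> nat \<Rightarrow> 'a" where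
  "rphi' a b c d i = of_nat i * (of_nat i - of_nat d - 1)
      * (a - b + c - of_nat d / 2 + of_nat i) * (a - b - c - of_nat d / 2 + of_nat i - 1)"

end

theory Submission
  imports Defs "Jordan_Normal_Form.Determinant"
begin

text \<open>
  Expanding the product that defines \<open>w\<^sub>i\<close> gives
  \<open>w\<^sub>i = (\<Sum>j\<le>i. (i choose j) * pochhammer (d - i + 1) (i - j) * pochhammer (2 a + 1) (i - j) * v\<^sub>j)\<close>,
  so the matrix \<open>W\<close> with columns \<open>w\<^sub>0, \<dots>, w\<^sub>d\<close> is upper unitriangular.
  The stated actions of \<open>A\<close> and \<open>B\<close> on the \<open>w\<^sub>i\<close> are identities between these coefficients:
  for \<open>A\<close> it is Pascal's rule combined with \<open>\<theta>\<^sub>j - \<theta>\<^sub>d\<^sub>-\<^sub>i = (d - i - j) (2 a + 1 + i - j)\<close>; for \<open>B\<close>,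
  two binomial absorptions reduce it to a quadratic identity in \<open>a, b, c\<close>.
  Since \<open>\<theta>\<^sub>i\<close> and \<open>\<phi>\<^sub>i\<close> taken at \<open>-a-1\<close> are \<open>\<theta>\<^sub>d\<^sub>-\<^sub>i\<close> and \<open>\<phi>'\<^sub>i\<close> taken at \<open>a\<close>, these identities
  say \<open>A W = W A'\<close> and \<open>B W = W B'\<close> for the matrices \<open>A', B'\<close> of \<open>R\<^sub>d(-a-1,b,c)\<close>. Conjugation
  by \<open>W\<^sup>-\<^sup>1\<close> therefore intertwines \<open>A\<close> and \<open>B\<close>, hence also \<open>C = \<delta> - A - B\<close> (\<open>\<delta>\<close> is invariant
  under \<open>a \<mapsto> -a-1\<close>) and \<open>D = [A,B]/2\<close>.
\<close>

section \<open>Coordinates of the vectors w_i\<close>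

lemma Suc_times_binomial_Suc: "Suc k * (n choose Suc k) = (n - k) * (n choose k)"
proof (cases n)
  case (Suc n')
  then show ?thesis by (metis Suc_times_binomial binomial_absorb_comp diff_Suc_1)
qed simp

definition w_coeff :: "'a::comm_ring_1 \<Rightarrow> nat \<Rightarrow> nat \<Rightarrow> nat \<Rightarrow> 'a" where
  "w_coeff a d i j = of_nat (i choose j)
     * pochhammer (of_nat d - of_nat i + 1) (i - j) * pochhammer (2 * a + 1) (i - j)"

lemma w_coeff_eq_0: "i < j \<Longrightarrow> w_coeff a d i j = 0"
  by (simp add: w_coeff_def binomial_eq_0)

lemma w_coeff_diag [simp]: "w_coeff a d i i = 1"
  by (simp add: w_coeff_def)

lemma w_coeff_beyond_top: "j \<le> d \<Longrightarrow> w_coeff a d (Suc d) j = 0"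
  by (simp add: w_coeff_def pochhammer_0_left)

lemma w_coeff_Suc:
  "w_coeff a d (Suc i) j
     = (of_nat d - of_nat i - of_nat j) * (2 * a + 1 + of_nat i - of_nat j) * w_coeff a d i j
       + (if 0 < j then w_coeff a d i (j - 1) else 0)"
proof (cases "Suc i < j \<or> j = Suc i")
  case True
  then show ?thesis by (auto simp: w_coeff_eq_0)
next
  case False
  then have "j \<le> i" by auto
  then obtain m where i: "i = j + m" using le_Suc_ex by blast
  have i_minus_j: "i - j = m" and Suc_i_minus_j: "Suc i - j = Suc m" using i by simp_all
  define p r :: 'a where "p = pochhammer (of_nat d - of_nat i + 1) m" and "r = pochhammer (2 * a + 1) m"
  have p_Suc: "pochhammer (of_nat d - of_nat (Suc i) + 1) (Suc m) = (of_nat d - of_nat i) * p"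
    unfolding p_def pochhammer_rec by simp
  have p_Suc': "pochhammer (of_nat d - of_nat i + 1) (Suc m) = p * (of_nat d - of_nat j + 1)"
    unfolding p_def pochhammer_Suc by (simp add: i algebra_simps)
  have r_Suc: "pochhammer (2 * a + 1) (Suc m) = r * (2 * a + 1 + of_nat m)"
    unfolding r_def pochhammer_Suc ..
  show ?thesis
  proof (cases j)
    case 0
    have "w_coeff a d (Suc i) j = (of_nat d - of_nat i) * (2 * a + 1 + of_nat i) * (p * r)"
      unfolding w_coeff_def Suc_i_minus_j i_minus_j p_Suc r_Suc by (simp add: 0 i)
    then show ?thesis by (simp add: w_coeff_def p_def r_def 0 i)
  next
    case (Suc k)
    define Cj Ck :: 'a where "Cj = of_nat (i choose j)" and "Ck = of_nat (i choose k)"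
    have binom: "of_nat j * Cj = (of_nat m + 1) * Ck"
      using arg_cong[OF Suc_times_binomial_Suc[of k i], of "of_nat :: nat \<Rightarrow> 'a"]
      by (simp add: Cj_def Ck_def Suc i algebra_simps del: binomial_Suc_Suc)
    have "w_coeff a d (Suc i) j = (Cj + Ck) * ((of_nat d - of_nat i) * p) * (r * (2 * a + 1 + of_nat m))"
      unfolding w_coeff_def p_Suc[symmetric] r_Suc[symmetric] by (simp add: Cj_def Ck_def Suc i add_ac)
    also have "\<dots> = (of_nat d - of_nat i - of_nat j) * (2 * a + 1 + of_nat i - of_nat j) * (Cj * p * r)
       + Ck * (p * (of_nat d - of_nat j + 1)) * (r * (2 * a + 1 + of_nat m))
       + (of_nat j * Cj - (of_nat m + 1) * Ck) * p * r * (2 * a + 1 + of_nat m)"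
      by (simp add: i algebra_simps)
    also have "\<dots> = (of_nat d - of_nat i - of_nat j) * (2 * a + 1 + of_nat i - of_nat j) * w_coeff a d i j
       + w_coeff a d i (j - 1)"
      unfolding binom p_Suc'[symmetric] r_Suc[symmetric] by (simp add: w_coeff_def Cj_def Ck_def p_def r_def Suc i)
    finally show ?thesis using Suc by simp
  qed
qed

lemma w_coeff_absorb_row:
  assumes "k < i"
  shows "(of_nat i - of_nat k) * w_coeff a d i k
    = of_nat i * (of_nat d - of_nat i + 1) * (2 * a + of_nat i - of_nat k) * w_coeff a d (i - 1) k"
proof -
  obtain m where i: "i = Suc (k + m)" using assms less_imp_Suc_add by blast
  define q r :: 'a
    where "q = pochhammer (of_nat d - of_nat (i - 1) + 1) m" and "r = pochhammer (2 * a + 1) m"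
  have "i - k = Suc m" by (simp add: i)
  then have "Suc m * (i choose k) = i * ((i - 1) choose k)"
    using binomial_absorb_comp[of i k] by simp
  then have binom: "of_nat (Suc m) * of_nat (i choose k) = (of_nat i * of_nat ((i - 1) choose k) :: 'a)"
    by (simp only: of_nat_mult[symmetric])
  have "pochhammer (of_nat d - of_nat i + 1) (Suc m) = (of_nat d - of_nat i + 1) * q"
    unfolding pochhammer_rec q_def by (simp add: i algebra_simps)
  moreover have "pochhammer (2 * a + 1) (Suc m) = r * (2 * a + of_nat i - of_nat k)"
    unfolding pochhammer_Suc r_def by (simp add: i algebra_simps)
  moreover have "(of_nat i - of_nat k :: 'a) = of_nat (Suc m)"
    by (simp add: i)
  ultimately have "(of_nat i - of_nat k) * w_coeff a d i k
      = (of_nat (Suc m) * of_nat (i choose k)) * (of_nat d - of_nat i + 1) * q * (r * (2 * a + of_nat i - of_nat k))"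
    unfolding w_coeff_def \<open>i - k = Suc m\<close> by (simp only: mult.assoc)
  also have "\<dots> = of_nat i * (of_nat d - of_nat i + 1) * (2 * a + of_nat i - of_nat k) * w_coeff a d (i - 1) k"
    unfolding binom by (simp add: w_coeff_def q_def r_def i algebra_simps del: binomial_Suc_Suc)
  finally show ?thesis .
qed

lemma w_coeff_absorb_col:
  assumes "k < i"
  shows "(of_nat k + 1) * (of_nat d - of_nat k) * w_coeff a d i (Suc k)
    = of_nat i * (of_nat d - of_nat i + 1) * w_coeff a d (i - 1) k"
proof -
  obtain m where i: "i = Suc (k + m)" using assms less_imp_Suc_add by blast
  define p q r :: 'a
    where "p = pochhammer (of_nat d - of_nat i + 1) m"
      and "q = pochhammer (of_nat d - of_nat (i - 1) + 1) m" and "r = pochhammer (2 * a + 1) m"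
  have binom: "(of_nat k + 1) * of_nat (i choose Suc k) = (of_nat i * of_nat ((i - 1) choose k) :: 'a)"
    using arg_cong[OF Suc_times_binomial[of k "k + m"], of "of_nat :: nat \<Rightarrow> 'a"]
    by (simp only: i of_nat_mult of_nat_Suc diff_Suc_1 add.commute)
  have "(of_nat d - of_nat k) * p = pochhammer (of_nat d - of_nat i + 1) (Suc m)"
    unfolding pochhammer_Suc p_def by (simp add: i algebra_simps)
  also have "\<dots> = (of_nat d - of_nat i + 1) * q"
    unfolding pochhammer_rec q_def by (simp add: i algebra_simps)
  finally have pq: "(of_nat d - of_nat k) * p = (of_nat d - of_nat i + 1) * q" .
  have "(of_nat k + 1) * (of_nat d - of_nat k) * w_coeff a d i (Suc k)
      = ((of_nat k + 1) * of_nat (i choose Suc k)) * ((of_nat d - of_nat k) * p) * r"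
    unfolding w_coeff_def p_def r_def by (simp add: i algebra_simps del: binomial_Suc_Suc)
  also have "\<dots> = of_nat i * (of_nat d - of_nat i + 1) * w_coeff a d (i - 1) k"
    unfolding binom pq by (simp add: w_coeff_def q_def r_def i algebra_simps del: binomial_Suc_Suc)
  finally show ?thesis .
qed

section \<open>Identities between the parameters\<close>

lemma rtheta_diff:
  fixes x :: "'a::field"
  assumes "(2::'a) \<noteq> 0"
  shows "rtheta x d j - rtheta x d i
    = (of_nat i - of_nat j) * (2 * x + of_nat d + 1 - of_nat i - of_nat j)"
proof -
  define h :: 'a where "h = of_nat d / 2"
  have "of_nat d = 2 * h" using assms by (simp add: h_def)
  then show ?thesis unfolding rtheta_def h_def[symmetric] by (simp add: algebra_simps)
qed

lemma rtheta_reflect: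
  fixes x :: "'a::field"
  assumes "(2::'a) \<noteq> 0" "j \<le> d"
  shows "rtheta (- x - 1) d j = rtheta x d (d - j)"
proof -
  define h :: 'a where "h = of_nat d / 2"
  have "of_nat d = 2 * h" using assms by (simp add: h_def)
  then show ?thesis unfolding rtheta_def of_nat_diff[OF assms(2)] h_def[symmetric]
    by (simp add: algebra_simps)
qed

lemma rphi_reflect: "rphi (- a - 1) b c d i = rphi' a b c d i"
proof -
  define h :: 'a where "h = of_nat d / 2"
  show ?thesis unfolding rphi_def rphi'_def h_def[symmetric] by (simp add: algebra_simps)
qed

lemma rdelta_reflect: "rdelta (- a - 1) b c d = rdelta a b c d"
  unfolding rdelta_def by (simp add: algebra_simps)

lemma racah_scalar_identity:
  fixes a b c h I K :: "'a::comm_ring_1"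
  shows "(2 * b + 2 * h + 1 - K - I) * (2 * a + I - K)
     - (a + b + c + h - (K + 1) + 2) * (a + b - c + h - (K + 1) + 1)
     = - ((a - b + c - h + I) * (a - b - c - h + I - 1))"
  by (simp add: algebra_simps)

lemma w_coeff_B:
  fixes a b c :: "'a::field"
  assumes "(2::'a) \<noteq> 0"
  shows "rtheta b d k * w_coeff a d i k + rphi a b c d (Suc k) * w_coeff a d i (Suc k)
    = rtheta b d i * w_coeff a d i k + (if 0 < i then rphi' a b c d i * w_coeff a d (i - 1) k else 0)"
proof (cases "k < i")
  case False
  then show ?thesis by (cases "k = i") (auto simp: w_coeff_eq_0)
next
  case True
  define h :: 'a where "h = of_nat d / 2"
  have d: "of_nat d = 2 * h" using assms by (simp add: h_def)
  define I K :: 'a where "I = of_nat i" and "K = of_nat k"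
  define G where "G = I * (2 * h - I + 1) * w_coeff a d (i - 1) k"
  define E XY Z where "E = (2 * b + 2 * h + 1 - K - I) * (2 * a + I - K)"
    and "XY = (a + b + c + h - (K + 1) + 2) * (a + b - c + h - (K + 1) + 1)"
    and "Z = (a - b + c - h + I) * (a - b - c - h + I - 1)"
  have "(rtheta b d k - rtheta b d i) * w_coeff a d i k
      = (2 * b + 2 * h + 1 - K - I) * ((of_nat i - of_nat k) * w_coeff a d i k)"
    unfolding rtheta_diff[OF assms] d by (simp add: I_def K_def algebra_simps)
  also have "\<dots> = E * G"
    unfolding w_coeff_absorb_row[OF True] d by (simp add: E_def G_def I_def K_def algebra_simps)
  finally have w_ik: "(rtheta b d k - rtheta b d i) * w_coeff a d i k = E * G" .
  have "rphi a b c d (Suc k) * w_coeff a d i (Suc k)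
      = - XY * ((of_nat k + 1) * (of_nat d - of_nat k) * w_coeff a d i (Suc k))"
    unfolding rphi_def h_def[symmetric] XY_def K_def by (simp add: algebra_simps)
  also have "\<dots> = - XY * G"
    unfolding w_coeff_absorb_col[OF True] unfolding d by (simp add: G_def I_def)
  finally have w_ik1: "rphi a b c d (Suc k) * w_coeff a d i (Suc k) = - XY * G" .
  have w_i1k: "rphi' a b c d i * w_coeff a d (i - 1) k = - Z * G"
    unfolding rphi'_def h_def[symmetric] unfolding d by (simp add: Z_def G_def I_def algebra_simps)
  have "rtheta b d k * w_coeff a d i k + rphi a b c d (Suc k) * w_coeff a d i (Suc k)
      = rtheta b d i * w_coeff a d i k + (E - XY) * G"
    using w_ik w_ik1 by (simp add: algebra_simps)
  also have "E - XY = - Z"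
    unfolding E_def XY_def Z_def by (rule racah_scalar_identity)
  finally show ?thesis using w_i1k True by simp
qed

lemma sum_one_point:
  assumes "p \<in> A" "finite A" "\<And>l. l \<in> A \<Longrightarrow> l \<noteq> p \<Longrightarrow> f l = 0"
  shows "sum f A = f p"
proof -
  have "sum f A = sum f {p}"
    using assms by (intro sum.mono_neutral_right) auto
  then show ?thesis by simp
qed

lemma sum_two_points:
  assumes "p \<in> A" "q \<in> A" "p \<noteq> q" "finite A" "\<And>l. l \<in> A \<Longrightarrow> l \<noteq> p \<Longrightarrow> l \<noteq> q \<Longrightarrow> f l = 0"
  shows "sum f A = f p + f q"
proof -
  have "sum f A = sum f {p, q}"
    using assms by (intro sum.mono_neutral_right) auto
  then show ?thesis using assms(3) by simp
qed

lemma mult_minus_smult_one_mat_vec: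
  fixes A :: "'a::comm_ring_1 mat"
  assumes "A \<in> carrier_mat n n" "v \<in> carrier_vec n"
  shows "(A - k \<cdot>\<^sub>m 1\<^sub>m n) *\<^sub>v v = A *\<^sub>v v - k \<cdot>\<^sub>v v"
  using assms by (subst minus_mult_distrib_mat_vec[of _ n n]) auto

lemma det_nonzero_imp_inverse_mat:
  fixes A :: "'a::field mat"
  assumes "A \<in> carrier_mat n n" "det A \<noteq> 0"
  obtains B where "B \<in> carrier_mat n n" "A * B = 1\<^sub>m n" "B * A = 1\<^sub>m n"
  using det_non_zero_imp_unit[OF assms, of "()"] by (auto simp: Units_def ring_mat_def)

lemma invertible_mat_if_inverse:
  fixes A B :: "'a::comm_ring_1 mat"
  assumes "A \<in> carrier_mat n n" "B \<in> carrier_mat n n" "A * B = 1\<^sub>m n" "B * A = 1\<^sub>m n"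
  shows "invertible_mat A"
  using assms unfolding invertible_mat_def inverts_mat_def by auto

lemma intertwining_by_inverse:
  fixes P W X Y :: "'a::comm_ring_1 mat"
  assumes "P \<in> carrier_mat n n" "W \<in> carrier_mat n n" "X \<in> carrier_mat n n" "Y \<in> carrier_mat n n"
    and "P * W = 1\<^sub>m n" "W * P = 1\<^sub>m n" "X * W = W * Y"
  shows "P * X = Y * P"
proof -
  have "P * X = P * X * (W * P)" using assms(1,3) by (simp add: assms(6))
  also have "\<dots> = P * (X * W) * P" using assms(1-4) by (simp add: assoc_mult_mat[of _ n n _ n _ n])
  also have "\<dots> = P * (W * Y) * P" by (simp only: assms(7))
  also have "\<dots> = (P * W) * Y * P" using assms(1-4) by (simp add: assoc_mult_mat[of _ n n _ n _ n])
  also have "\<dots> = Y * P" using assms(1,4) by (simp add: assms(5))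
  finally show ?thesis .
qed

lemma intertwining_one:
  fixes P :: "'a::comm_ring_1 mat"
  assumes "P \<in> carrier_mat n n"
  shows "P * 1\<^sub>m n = 1\<^sub>m n * P"
  using assms by simp

lemma intertwining_minus:
  fixes P X X' Y Y' :: "'a::comm_ring_1 mat"
  assumes "P \<in> carrier_mat n n" "X \<in> carrier_mat n n" "X' \<in> carrier_mat n n"
    "Y \<in> carrier_mat n n" "Y' \<in> carrier_mat n n"
    and "P * X = X' * P" "P * Y = Y' * P"
  shows "P * (X - Y) = (X' - Y') * P"
  using assms by (simp add: mult_minus_distrib_mat[of _ n n] minus_mult_distrib_mat[of _ n n])

lemma intertwining_mult:
  fixes P X X' Y Y' :: "'a::comm_ring_1 mat"
  assumes "P \<in> carrier_mat n n" "X \<in> carrier_mat n n" "X' \<in> carrier_mat n n"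
    "Y \<in> carrier_mat n n" "Y' \<in> carrier_mat n n"
    and "P * X = X' * P" "P * Y = Y' * P"
  shows "P * (X * Y) = (X' * Y') * P"
proof -
  have "P * (X * Y) = (P * X) * Y" using assms(1-5) by (simp add: assoc_mult_mat[of _ n n _ n _ n])
  also have "\<dots> = X' * (P * Y)" using assms(1-5) by (simp add: assms(6) assoc_mult_mat[of _ n n _ n _ n])
  also have "\<dots> = (X' * Y') * P" using assms(1-5) by (simp add: assms(7) assoc_mult_mat[of _ n n _ n _ n])
  finally show ?thesis .
qed

lemma intertwining_smult:
  fixes P X X' :: "'a::comm_ring_1 mat"
  assumes "P \<in> carrier_mat n n" "X \<in> carrier_mat n n" "X' \<in> carrier_mat n n" "P * X = X' * P"
  shows "P * (k \<cdot>\<^sub>m X) = (k \<cdot>\<^sub>m X') * P"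
  using assms by (simp add: mult_smult_distrib[of _ n n _ n] mult_smult_assoc_mat[of _ n n _ n])

lemma RA_carrier [simp]: "RA a b c d \<in> carrier_mat (d + 1) (d + 1)"
  by (simp add: RA_def)

lemma RB_carrier [simp]: "RB a b c d \<in> carrier_mat (d + 1) (d + 1)"
  by (simp add: RB_def)

lemma RA_mult_index:
  assumes "M \<in> carrier_mat (d + 1) n" "j \<le> d" "i < n"
  shows "(RA a b c d * M) $$ (j, i) = rtheta a d j * M $$ (j, i) + (if 0 < j then M $$ (j - 1, i) else 0)"
proof -
  have "(RA a b c d * M) $$ (j, i) = (\<Sum>l = 0..<d + 1. RA a b c d $$ (j, l) * M $$ (l, i))"
    using assms by (simp add: RA_def scalar_prod_def)
  also have "\<dots> = rtheta a d j * M $$ (j, i) + (if 0 < j then M $$ (j - 1, i) else 0)"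
  proof (cases j)
    case 0
    then show ?thesis using assms by (subst sum_one_point[where p = j]) (auto simp: RA_def)
  next
    case (Suc j')
    then show ?thesis using assms by (subst sum_two_points[where p = j and q = j']) (auto simp: RA_def)
  qed
  finally show ?thesis .
qed

lemma RB_mult_index:
  assumes "M \<in> carrier_mat (d + 1) n" "j \<le> d" "i < n"
  shows "(RB a b c d * M) $$ (j, i)
    = rtheta b d j * M $$ (j, i) + (if j < d then rphi a b c d (Suc j) * M $$ (Suc j, i) else 0)"
proof -
  have "(RB a b c d * M) $$ (j, i) = (\<Sum>l = 0..<d + 1. RB a b c d $$ (j, l) * M $$ (l, i))"
    using assms by (simp add: RB_def scalar_prod_def)
  also have "\<dots> = rtheta b d j * M $$ (j, i) + (if j < d then rphi a b c d (Suc j) * M $$ (Suc j, i) else 0)"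
  proof (cases "j < d")
    case False
    then show ?thesis using assms by (subst sum_one_point[where p = j]) (auto simp: RB_def)
  next
    case True
    then show ?thesis using assms by (subst sum_two_points[where p = j and q = "Suc j"]) (auto simp: RB_def)
  qed
  finally show ?thesis .
qed

lemma col_mult_RA:
  assumes "M \<in> carrier_mat n (d + 1)" "i \<le> d"
  shows "col (M * RA a b c d) i = rtheta a d i \<cdot>\<^sub>v col M i + (if i < d then col M (Suc i) else 0\<^sub>v n)"
proof (rule eq_vecI)
  fix j assume "j < dim_vec (rtheta a d i \<cdot>\<^sub>v col M i + (if i < d then col M (Suc i) else 0\<^sub>v n))"
  then have j: "j < n" using assms by (simp split: if_splits)
  have "col (M * RA a b c d) i $ j = (\<Sum>l = 0..<d + 1. M $$ (j, l) * RA a b c d $$ (l, i))"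
    using assms j by (simp add: RA_def scalar_prod_def)
  also have "\<dots> = M $$ (j, i) * rtheta a d i + (if i < d then M $$ (j, Suc i) else 0)"
  proof (cases "i < d")
    case False
    then show ?thesis using assms by (subst sum_one_point[where p = i]) (auto simp: RA_def)
  next
    case True
    then show ?thesis using assms by (subst sum_two_points[where p = i and q = "Suc i"]) (auto simp: RA_def)
  qed
  finally show "col (M * RA a b c d) i $ j
      = (rtheta a d i \<cdot>\<^sub>v col M i + (if i < d then col M (Suc i) else 0\<^sub>v n)) $ j"
    using assms j by (simp add: mult.commute)
qed (use assms in simp)

lemma col_mult_RB:
  assumes "M \<in> carrier_mat n (d + 1)" "i \<le> d"
  shows "col (M * RB a b c d) i
    = rtheta b d i \<cdot>\<^sub>v col M i + (if 0 < i then rphi a b c d i \<cdot>\<^sub>v col M (i - 1) else 0\<^sub>v n)"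
proof (rule eq_vecI)
  fix j assume "j < dim_vec (rtheta b d i \<cdot>\<^sub>v col M i + (if 0 < i then rphi a b c d i \<cdot>\<^sub>v col M (i - 1) else 0\<^sub>v n))"
  then have j: "j < n" using assms by (simp split: if_splits)
  have "col (M * RB a b c d) i $ j = (\<Sum>l = 0..<d + 1. M $$ (j, l) * RB a b c d $$ (l, i))"
    using assms j by (simp add: RB_def scalar_prod_def)
  also have "\<dots> = M $$ (j, i) * rtheta b d i + (if 0 < i then M $$ (j, i - 1) * rphi a b c d i else 0)"
  proof (cases i)
    case 0
    then show ?thesis using assms by (subst sum_one_point[where p = i]) (auto simp: RB_def)
  next
    case (Suc i')
    then show ?thesis using assms by (subst sum_two_points[where p = i and q = i']) (auto simp: RB_def)
  qed
  finally show "col (M * RB a b c d) i $ j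
      = (rtheta b d i \<cdot>\<^sub>v col M i + (if 0 < i then rphi a b c d i \<cdot>\<^sub>v col M (i - 1) else 0\<^sub>v n)) $ j"
    using assms j by (simp add: mult.commute)
qed (use assms in simp)

section \<open>The change of basis\<close>

definition w_mat :: "'a::comm_ring_1 \<Rightarrow> nat \<Rightarrow> 'a mat" where
  "w_mat a d = mat (d + 1) (d + 1) (\<lambda>(j, i). w_coeff a d i j)"

lemma w_mat_carrier [simp]: "w_mat a d \<in> carrier_mat (d + 1) (d + 1)"
  by (simp add: w_mat_def)

lemma w_mat_dim [simp]: "dim_row (w_mat a d) = d + 1" "dim_col (w_mat a d) = d + 1"
  by (simp_all add: w_mat_def)

lemma w_mat_index [simp]: "j \<le> d \<Longrightarrow> i \<le> d \<Longrightarrow> w_mat a d $$ (j, i) = w_coeff a d i j"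
  by (simp add: w_mat_def)

lemma det_w_mat: "det (w_mat a d) = 1"
proof -
  have "upper_triangular (w_mat a d)"
    by (auto simp: upper_triangular_def w_mat_def w_coeff_eq_0)
  then have "det (w_mat a d) = prod_list (diag_mat (w_mat a d))"
    by (rule det_upper_triangular[OF _ w_mat_carrier])
  also have "diag_mat (w_mat a d) = map (\<lambda>_. 1) [0..<d + 1]"
    unfolding diag_mat_def by (intro map_cong) auto
  finally show ?thesis by (simp add: map_replicate_const del: upt_Suc)
qed

lemma RA_mult_w_mat:
  fixes a :: "'a::field"
  assumes "(2::'a) \<noteq> 0"
  shows "RA a b c d * w_mat a d = w_mat a d * RA (- a - 1) b c d"
proof (rule eq_matI)
  fix j i assume "j < dim_row (w_mat a d * RA (- a - 1) b c d)" "i < dim_col (w_mat a d * RA (- a - 1) b c d)"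
  then have j: "j \<le> d" and i: "i \<le> d" by (simp_all add: w_mat_def RA_def)
  have "w_coeff a d (Suc i) j
      = (rtheta a d j - rtheta a d (d - i)) * w_coeff a d i j + (if 0 < j then w_coeff a d i (j - 1) else 0)"
    unfolding w_coeff_Suc rtheta_diff[OF assms] using i by (simp add: of_nat_diff algebra_simps)
  moreover have "i = d \<Longrightarrow> w_coeff a d (Suc i) j = 0"
    using j by (simp add: w_coeff_beyond_top)
  ultimately have "rtheta a d j * w_coeff a d i j + (if 0 < j then w_coeff a d i (j - 1) else 0)
      = w_coeff a d i j * rtheta a d (d - i) + (if i < d then w_coeff a d (Suc i) j else 0)"
    using i by (auto simp: algebra_simps)
  moreover have "(RA a b c d * w_mat a d) $$ (j, i)
      = rtheta a d j * w_coeff a d i j + (if 0 < j then w_coeff a d i (j - 1) else 0)"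
    using RA_mult_index[OF w_mat_carrier[of a d] j, of i] i j by simp
  moreover have "(w_mat a d * RA (- a - 1) b c d) $$ (j, i) = col (w_mat a d * RA (- a - 1) b c d) i $ j"
    using i j by (simp add: w_mat_def RA_def)
  moreover have "\<dots> = w_coeff a d i j * rtheta a d (d - i) + (if i < d then w_coeff a d (Suc i) j else 0)"
    using i j by (simp add: col_mult_RA[OF w_mat_carrier i] rtheta_reflect[OF assms])
  ultimately show "(RA a b c d * w_mat a d) $$ (j, i) = (w_mat a d * RA (- a - 1) b c d) $$ (j, i)"
    by simp
qed (simp_all add: w_mat_def RA_def)

lemma RB_mult_w_mat:
  fixes a b c :: "'a::field"
  assumes "(2::'a) \<noteq> 0"
  shows "RB a b c d * w_mat a d = w_mat a d * RB (- a - 1) b c d"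
proof (rule eq_matI)
  fix j i assume "j < dim_row (w_mat a d * RB (- a - 1) b c d)" "i < dim_col (w_mat a d * RB (- a - 1) b c d)"
  then have j: "j \<le> d" and i: "i \<le> d" by (simp_all add: w_mat_def RB_def)
  have "j = d \<Longrightarrow> w_coeff a d i (Suc j) = 0"
    using i by (simp add: w_coeff_eq_0)
  then have "rtheta b d j * w_coeff a d i j + (if j < d then rphi a b c d (Suc j) * w_coeff a d i (Suc j) else 0)
      = w_coeff a d i j * rtheta b d i + (if 0 < i then w_coeff a d (i - 1) j * rphi' a b c d i else 0)"
    using w_coeff_B[OF assms, of b d j a i c] j by (auto simp: algebra_simps)
  moreover have "(RB a b c d * w_mat a d) $$ (j, i)
      = rtheta b d j * w_coeff a d i j + (if j < d then rphi a b c d (Suc j) * w_coeff a d i (Suc j) else 0)"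
    using RB_mult_index[OF w_mat_carrier[of a d] j, of i] i j by simp
  moreover have "(w_mat a d * RB (- a - 1) b c d) $$ (j, i) = col (w_mat a d * RB (- a - 1) b c d) i $ j"
    using i j by (simp add: w_mat_def RB_def)
  moreover have "\<dots> = w_coeff a d i j * rtheta b d i + (if 0 < i then w_coeff a d (i - 1) j * rphi' a b c d i else 0)"
    using i j by (simp add: col_mult_RB[OF w_mat_carrier i] rphi_reflect)
  ultimately show "(RB a b c d * w_mat a d) $$ (j, i) = (w_mat a d * RB (- a - 1) b c d) $$ (j, i)"
    by simp
qed (simp_all add: w_mat_def RB_def)

lemma wvec_eq_col_w_mat:
  fixes a b c :: "'a::field"
  assumes "(2::'a) \<noteq> 0" "i \<le> d"
  shows "wvec a b c d i = col (w_mat a d) i"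
  using assms(2)
proof (induction i)
  case 0
  show ?case by (rule eq_vecI) (auto simp: w_coeff_def binomial_eq_0)
next
  case (Suc i)
  let ?W = "w_mat a d" and ?t = "rtheta a d (d - i)"
  have IH: "wvec a b c d i = col ?W i" using Suc.IH Suc.prems by simp
  have "wvec a b c d (Suc i) = RA a b c d *\<^sub>v col ?W i - ?t \<cdot>\<^sub>v col ?W i"
    unfolding wvec.simps IH by (rule mult_minus_smult_one_mat_vec[OF RA_carrier carrier_vecI]) simp
  also have "RA a b c d *\<^sub>v col ?W i = col (RA a b c d * ?W) i"
    using Suc by (simp add: col_mult2[OF RA_carrier w_mat_carrier])
  also have "\<dots> = col (?W * RA (- a - 1) b c d) i"
    by (simp add: RA_mult_w_mat[OF assms(1)])
  also have "\<dots> = ?t \<cdot>\<^sub>v col ?W i + col ?W (Suc i)"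
    using Suc.prems by (simp add: col_mult_RA[OF w_mat_carrier] rtheta_reflect[OF assms(1)])
  finally show ?case
    by (intro eq_vecI) (simp_all add: Suc.prems)
qed

lemma mat_of_cols_wvec:
  fixes a b c :: "'a::field"
  assumes "(2::'a) \<noteq> 0"
  shows "mat_of_cols (d + 1) (map (wvec a b c d) [0..<d + 1]) = w_mat a d"
  by (rule eq_matI) (simp_all add: mat_of_cols_index wvec_eq_col_w_mat[OF assms] del: wvec.simps upt_Suc)

lemma RA_mult_wvec:
  fixes a b c :: "'a::field"
  assumes "(2::'a) \<noteq> 0" "i \<le> d"
  shows "RA a b c d *\<^sub>v wvec a b c d i
    = rtheta a d (d - i) \<cdot>\<^sub>v wvec a b c d i + (if i < d then wvec a b c d (i + 1) else 0\<^sub>v (d + 1))"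
proof -
  have "RA a b c d *\<^sub>v wvec a b c d i = col (w_mat a d * RA (- a - 1) b c d) i"
    using assms by (simp add: wvec_eq_col_w_mat col_mult2[OF RA_carrier w_mat_carrier]
        RA_mult_w_mat[OF assms(1), symmetric] del: wvec.simps)
  then show ?thesis
    using assms by (auto simp: col_mult_RA[OF w_mat_carrier assms(2)] rtheta_reflect[OF assms]
        wvec_eq_col_w_mat[OF assms(1)] simp del: wvec.simps)
qed

lemma RB_mult_wvec:
  fixes a b c :: "'a::field"
  assumes "(2::'a) \<noteq> 0" "i \<le> d"
  shows "RB a b c d *\<^sub>v wvec a b c d i
    = rtheta b d i \<cdot>\<^sub>v wvec a b c d i
      + (if 0 < i then rphi' a b c d i \<cdot>\<^sub>v wvec a b c d (i - 1) else 0\<^sub>v (d + 1))"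
proof -
  have "RB a b c d *\<^sub>v wvec a b c d i = col (w_mat a d * RB (- a - 1) b c d) i"
    using assms by (simp add: wvec_eq_col_w_mat col_mult2[OF RB_carrier w_mat_carrier]
        RB_mult_w_mat[OF assms(1), symmetric] del: wvec.simps)
  then show ?thesis
    using assms by (auto simp: col_mult_RB[OF w_mat_carrier assms(2)] rphi_reflect
        wvec_eq_col_w_mat[OF assms(1)] simp del: wvec.simps)
qed

theorem proposition4p3:
  fixes a b c :: "'a::field" and d :: nat
  assumes char_ne_2: "(2::'a) \<noteq> 0"
    and alg_closed: "\<forall>p :: 'a poly. degree p > 0 \<longrightarrow> (\<exists>x. poly p x = 0)"
  shows "racah_iso d a b c (-a-1) b c
     \<and> invertible_mat (mat_of_cols (d+1) (map (wvec a b c d) [0..<d+1]))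
     \<and> (\<forall>i\<le>d. RA a b c d *\<^sub>v wvec a b c d i
                 = rtheta a d (d - i) \<cdot>\<^sub>v wvec a b c d i
                   + (if i < d then wvec a b c d (i+1) else 0\<^sub>v (d+1)))
     \<and> (\<forall>i\<le>d. RB a b c d *\<^sub>v wvec a b c d i
                 = rtheta b d i \<cdot>\<^sub>v wvec a b c d i
                   + (if 0 < i then rphi' a b c d i \<cdot>\<^sub>v wvec a b c d (i-1) else 0\<^sub>v (d+1)))"
proof -
  let ?n = "d + 1" and ?W = "w_mat a d" and ?a' = "- a - 1"
  obtain P where P: "P \<in> carrier_mat ?n ?n" and WP: "?W * P = 1\<^sub>m ?n" and PW: "P * ?W = 1\<^sub>m ?n"
    using det_nonzero_imp_inverse_mat[OF w_mat_carrier] det_w_mat by (metis one_neq_zero)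
  have PA: "P * RA a b c d = RA ?a' b c d * P"
    by (rule intertwining_by_inverse[OF P w_mat_carrier RA_carrier RA_carrier PW WP RA_mult_w_mat[OF char_ne_2]])
  have PB: "P * RB a b c d = RB ?a' b c d * P"
    by (rule intertwining_by_inverse[OF P w_mat_carrier RB_carrier RB_carrier PW WP RB_mult_w_mat[OF char_ne_2]])
  have PC: "P * RC a b c d = RC ?a' b c d * P"
    unfolding RC_def rdelta_reflect
    by (intro intertwining_minus[OF P] intertwining_smult[OF P] intertwining_one[OF P] PA PB)
      (auto simp: RA_def RB_def)
  have PD: "P * RD a b c d = RD ?a' b c d * P"
    unfolding RD_def
    by (intro intertwining_smult[OF P] intertwining_minus[OF P] intertwining_mult[OF P] PA PB)
      (auto simp: RA_def RB_def)
  have "racah_iso d a b c ?a' b c"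
    unfolding racah_iso_def using P PA PB PC PD invertible_mat_if_inverse[OF P w_mat_carrier PW WP] by blast
  moreover have "invertible_mat (mat_of_cols ?n (map (wvec a b c d) [0..<?n]))"
    unfolding mat_of_cols_wvec[OF char_ne_2] by (rule invertible_mat_if_inverse[OF w_mat_carrier P WP PW])
  ultimately show ?thesis
    using RA_mult_wvec[OF char_ne_2] RB_mult_wvec[OF char_ne_2] by blast
qed

end
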